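(* For $i=1,2$ let $P_i,R_i$ be $\mathrm{Sym}(n,\mathbb{R})$-valued and $Q_i$ be $\mathrm{Mat}(n,\mathbb{R})$-valued $C^1$ functions, defined on $\mathbb{R}^+=[0,\infty)$ for $i=1$ and on $\mathbb{R}^-=(-\infty,0]$ for $i=2$, each satisfying (F2), and such that $K_i(t)=\begin{bmatrix}P_i(t)&Q_i(t)\\Q_i(t)^T&R_i(t)\end{bmatrix}$ is positive definite for every $t$ in the respective domain. Let $\mathscr A^+_{1,M}=-\frac{d}{dt}(P_1\frac{d}{dt}+Q_1)+Q_1^T\frac{d}{dt}+R_1$ on $W^{2,2}(\mathbb{R}^+,\mathbb{R}^n)\subset L^2(\mathbb{R}^+,\mathbb{R}^n)$ and $\mathscr A^-_{2,M}=-\frac{d}{dt}(P_2\frac{d}{dt}+Q_2)+Q_2^T\frac{d}{dt}+R_2$ on $W^{2,2}(\mathbb{R}^-,\mathbb{R}^n)\subset L^2(\mathbb{R}^-,\mathbb{R}^n)$. Then the system $\mathscr A^+_{1,M}x_1=0$, $\mathscr A^-_{2,M}x_2=0$, $x_1(0)=x_2(0)$, $P_1(0)\dot x_1(0)+Q_1(0)x_1(0)=P_2(0)\dot x_2(0)+Q_2(0)x_2(0)$ has only the zero solution.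
   Context: (F2) for coefficients $P,Q,R$ on a half-line: the limits at the infinite end exist and there are $C_1,C_2,C_3>0$ with $\langle P(t)v,v\rangle\ge C_1|v|^2$, $|P(t)v|\ge C_1|v|$, $|Q(t)v|\le C_2|v|$, $|R(t)v|\le C_3|v|$ for all $t,v$. *)

theory Defs
  imports "HOL-Analysis.Analysis"
begin

definition C1_on :: "real set \<Rightarrow> (real \<Rightarrow> 'a::real_normed_vector) \<Rightarrow> bool" where
  "C1_on S f \<longleftrightarrow> (\<exists>f'. continuous_on S f' \<and>
      (\<forall>t\<in>S. (f has_vector_derivative f' t) (at t within S)))"

definition sym_valued :: "real set \<Rightarrow> (real \<Rightarrow> real^'n^'n) \<Rightarrow> bool" where
  "sym_valued S P \<longleftrightarrow> (\<forall>t\<in>S. transpose (P t) = P t)"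

definition block_mat :: "real^'n^'n \<Rightarrow> real^'n^'n \<Rightarrow> real^'n^'n \<Rightarrow> real^('n + 'n)^('n + 'n)" where
  "block_mat P Q R = (\<chi> i j. (case i of
      Inl a \<Rightarrow> (case j of Inl b \<Rightarrow> P $ a $ b | Inr b \<Rightarrow> Q $ a $ b)
    | Inr a \<Rightarrow> (case j of Inl b \<Rightarrow> Q $ b $ a | Inr b \<Rightarrow> R $ a $ b)))"

definition pos_def :: "real^'m^'m \<Rightarrow> bool" where
  "pos_def M \<longleftrightarrow> transpose M = M \<and> (\<forall>x. x \<noteq> 0 \<longrightarrow> x \<bullet> (M *v x) > 0)"

text \<open>Condition (F2); F is the filter at the infinite end (at_top or at_bot).\<close>
definition F2 :: "real set \<Rightarrow> real filter \<Rightarrow> (real \<Rightarrow> real^'n^'n) \<Rightarrow> (real \<Rightarrow> real^'n^'n)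
    \<Rightarrow> (real \<Rightarrow> real^'n^'n) \<Rightarrow> bool" where
  "F2 S F P Q R \<longleftrightarrow>
     (\<exists>L. (P \<longlongrightarrow> L) F) \<and> (\<exists>L. (Q \<longlongrightarrow> L) F) \<and> (\<exists>L. (R \<longlongrightarrow> L) F) \<and>
     (\<exists>C1 C2 C3. C1 > 0 \<and> C2 > 0 \<and> C3 > 0 \<and>
        (\<forall>t\<in>S. \<forall>v. (P t *v v) \<bullet> v \<ge> C1 * norm v ^ 2 \<and> norm (P t *v v) \<ge> C1 * norm v \<and>
                   norm (Q t *v v) \<le> C2 * norm v \<and> norm (R t *v v) \<le> C3 * norm v))"

text \<open>x (with derivatives x', x'') is an element of W^{2,2}(S) solving
  -(P x' + Q x)' + Q^T x' + R x = 0 on S.\<close>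
definition W22_solution :: "real set \<Rightarrow> (real \<Rightarrow> real^'n^'n) \<Rightarrow> (real \<Rightarrow> real^'n^'n)
    \<Rightarrow> (real \<Rightarrow> real^'n^'n) \<Rightarrow> (real \<Rightarrow> real^'n) \<Rightarrow> (real \<Rightarrow> real^'n) \<Rightarrow> (real \<Rightarrow> real^'n) \<Rightarrow> bool" where
  "W22_solution S P Q R x x' x'' \<longleftrightarrow>
     (\<forall>t\<in>S. (x has_vector_derivative x' t) (at t within S) \<and>
             (x' has_vector_derivative x'' t) (at t within S) \<and>
             ((\<lambda>s. P s *v x' s + Q s *v x s) has_vector_derivative
                 (transpose (Q t) *v x' t + R t *v x t)) (at t within S)) \<and>
     (\<lambda>t. norm (x t) ^ 2) integrable_on S \<and>
     (\<lambda>t. norm (x' t) ^ 2) integrable_on S \<and>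
     (\<lambda>t. norm (x'' t) ^ 2) integrable_on S"

end

(* For a solution x of the equation on a half-line, the boundary term
   f(t) = <x, P x' + Q x> of Green's identity has derivative <(x',x), K (x',x)>, which is
   nonnegative since K is positive definite; so f is nondecreasing. By (F2), |f| is
   eventually dominated by a multiple of |x|^2 + |x'|^2, which is integrable; so if
   f(T) > 0 for some T >= 0, monotonicity would keep |f| >= f(T) on [T,oo), which is
   impossible. Thus f <= 0 on [0,oo), and symmetrically f >= 0 on (-oo,0]. The interface
   conditions say exactly that the two boundary terms agree at 0, hence both vanish there,
   monotonicity forces them to vanish identically, and then <(x',x), K (x',x)> = 0 gives
   x = 0. *)

theory Submission
  imports Defs
begin

lemma norm_matrix_vector_mult_le:
  fixes A :: "real^'n^'m"
  shows "norm (A *v x) \<le> real CARD('m) * real CARD('n) * norm A * norm x"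
proof -
  have "onorm ((*v) A) \<le> real CARD('m) * real CARD('n) * norm A"
    by (rule onorm_le_matrix_component)
      (meson component_le_norm_cart Finite_Cartesian_Product.norm_nth_le order_trans)
  moreover have "norm (A *v x) \<le> onorm ((*v) A) * norm x"
    by (rule onorm) simp
  ultimately show ?thesis
    by (meson mult_right_mono norm_ge_zero order_trans)
qed

lemma tendsto_imp_eventually_matrix_vector_bounded:
  fixes P :: "'a \<Rightarrow> real^'n^'m"
  assumes "(P \<longlongrightarrow> L) F"
  shows "\<exists>B\<ge>0. \<forall>\<^sub>F t in F. \<forall>v. norm (P t *v v) \<le> B * norm v"
proof (intro exI conjI)
  let ?B = "real CARD('m) * real CARD('n) * (norm L + 1)"
  show "0 \<le> ?B" by simp
  have "\<forall>\<^sub>F t in F. dist (P t) L < 1"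
    using assms by (rule tendstoD) simp
  then show "\<forall>\<^sub>F t in F. \<forall>v. norm (P t *v v) \<le> ?B * norm v"
  proof eventually_elim
    case (elim t)
    then have "norm (P t) \<le> norm L + 1"
      using norm_triangle_sub[of "P t" L] by (simp add: dist_norm)
    show ?case
    proof
      fix v
      have "norm (P t *v v) \<le> real CARD('m) * real CARD('n) * norm (P t) * norm v"
        by (rule norm_matrix_vector_mult_le)
      also have "\<dots> \<le> ?B * norm v"
        using \<open>norm (P t) \<le> norm L + 1\<close> by (intro mult_right_mono mult_left_mono) auto
      finally show "norm (P t *v v) \<le> ?B * norm v" .
    qed
  qed
qed

lemma abs_inner_le_sum_squares:
  fixes A Q :: "real^'n^'n" and u v :: "real^'n"
  assumes "\<And>y. norm (A *v y) \<le> B * norm y" "\<And>y. norm (Q *v y) \<le> C * norm y" "0 \<le> B" "0 \<le> C"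
  shows "\<bar>u \<bullet> (A *v v + Q *v u)\<bar> \<le> (B + C) * (norm u ^ 2 + norm v ^ 2)"
proof -
  have "0 \<le> norm u * norm v"
    by simp
  then have uv: "norm u * norm v \<le> norm u ^ 2 + norm v ^ 2"
    using sum_squares_bound[of "norm u" "norm v"] unfolding power2_eq_square by linarith
  have "\<bar>u \<bullet> (A *v v + Q *v u)\<bar> \<le> norm u * norm (A *v v + Q *v u)"
    by (rule Cauchy_Schwarz_ineq2)
  also have "\<dots> \<le> norm u * (B * norm v + C * norm u)"
    by (intro mult_left_mono norm_triangle_le add_mono assms(1,2)) simp
  also have "\<dots> = B * (norm u * norm v) + C * norm u ^ 2"
    by (simp add: algebra_simps power2_eq_square)
  also have "\<dots> \<le> B * (norm u ^ 2 + norm v ^ 2) + C * (norm u ^ 2 + norm v ^ 2)"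
    using uv assms(3,4) by (intro add_mono mult_left_mono) auto
  finally show ?thesis
    by (simp add: algebra_simps)
qed

definition vec_join :: "real^'n \<Rightarrow> real^'n \<Rightarrow> real^('n + 'n)" where
  "vec_join u w = (\<chi> i. case i of Inl a \<Rightarrow> u $ a | Inr a \<Rightarrow> w $ a)"

lemma vec_join_eq_0_iff: "vec_join u w = 0 \<longleftrightarrow> u = 0 \<and> w = 0"
  by (auto simp: vec_join_def vec_eq_iff split: sum.splits)

lemma inner_block_mat_vec_join:
  fixes P Q R :: "real^'n^'n" and u w :: "real^'n"
  shows "vec_join u w \<bullet> (block_mat P Q R *v vec_join u w)
    = u \<bullet> (P *v u + Q *v w) + w \<bullet> (transpose Q *v u + R *v w)"
proof -
  have sum_Plus: "sum g UNIV = (\<Sum>a\<in>UNIV. g (Inl a)) + (\<Sum>a\<in>UNIV. g (Inr a))"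
    for g :: "'n + 'n \<Rightarrow> real"
    using sum.Plus[of "UNIV :: 'n set" "UNIV :: 'n set" g] by (simp add: comp_def)
  show ?thesis
    unfolding vec_join_def block_mat_def
    by (simp add: inner_vec_def matrix_vector_mult_def transpose_def sum_Plus
        sum_distrib_left sum.distrib algebra_simps)
qed

lemma pos_def_quadratic_nonneg: "pos_def M \<Longrightarrow> 0 \<le> z \<bullet> (M *v z)"
  unfolding pos_def_def by (cases "z = 0") (auto intro: less_imp_le)

lemma pos_def_quadratic_eq_0: "pos_def M \<Longrightarrow> z \<bullet> (M *v z) = 0 \<Longrightarrow> z = 0"
  unfolding pos_def_def by fastforce

lemma mono_on_if_has_real_derivative_nonneg:
  fixes f :: "real \<Rightarrow> real"
  assumes "is_interval S"
    and deriv: "\<And>t. t \<in> S \<Longrightarrow> (f has_real_derivative D t) (at t within S)"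
    and nonneg: "\<And>t. t \<in> S \<Longrightarrow> 0 \<le> D t"
  shows "mono_on S f"
proof (rule mono_onI)
  fix a b assume "a \<in> S" "b \<in> S" "a \<le> b"
  then have sub: "{a..b} \<subseteq> S"
    using \<open>is_interval S\<close> by (meson atLeastAtMost_iff is_interval_1 subsetI)
  have "\<exists>s\<in>{a..b}. f b - f a = (\<lambda>h. h * D s) (b - a)"
  proof (rule mvt_very_simple[OF \<open>a \<le> b\<close>])
    fix s assume "a \<le> s" "s \<le> b"
    then have "(f has_real_derivative D s) (at s within {a..b})"
      using deriv sub by (meson DERIV_subset atLeastAtMost_iff subsetD)
    then show "(f has_derivative (\<lambda>h. h * D s)) (at s within {a..b})"
      by (simp add: has_field_derivative_def mult_commute_abs)
  qed
  then obtain s where "s \<in> S" "f b - f a = (b - a) * D s"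
    using sub by (metis mult.commute subsetD)
  then show "f a \<le> f b"
    using \<open>a \<le> b\<close> nonneg[of s] by (metis diff_ge_0_iff_ge mult_nonneg_nonneg)
qed

lemma has_real_derivative_eq_0_if_vanishing:
  fixes f :: "real \<Rightarrow> real"
  assumes "t islimpt S" "(f has_real_derivative D) (at t within S)"
    and "\<forall>s\<in>S. f s = 0" "t \<in> S"
  shows "D = 0"
proof -
  have "((\<lambda>_. 0) has_real_derivative D) (at t within S)"
    using assms(2) by (rule has_field_derivative_transform_within[where d = 1]) (use assms(3,4) in auto)
  then have "((\<lambda>_. 0::real) has_vector_derivative D) (at t within S)"
    by (simp add: has_real_derivative_iff_has_vector_derivative)
  moreover have "at t within S \<noteq> bot"
    using \<open>t islimpt S\<close> by (simp add: trivial_limit_within)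
  moreover have "((\<lambda>_. 0::real) has_vector_derivative 0) (at t within S)"
    by (rule has_vector_derivative_const)
  ultimately show ?thesis
    using vector_derivative_unique_within by blast
qed

lemma integral_ge_on_subinterval:
  fixes g :: "real \<Rightarrow> real"
  assumes "g integrable_on S" "\<forall>t\<in>S. 0 \<le> g t"
    and "{a..b} \<subseteq> S" "a \<le> b" "\<forall>t\<in>{a..b}. c \<le> g t"
  shows "c * (b - a) \<le> integral S g"
proof -
  have g_ab: "g integrable_on {a..b}"
    using integrable_on_subinterval assms(1,3) by blast
  have "c * (b - a) = integral {a..b} (\<lambda>_. c)"
    using \<open>a \<le> b\<close> by simp
  also have "\<dots> \<le> integral {a..b} g"
    using g_ab assms(5) by (intro integral_le) auto
  also have "\<dots> \<le> integral S g"
    using g_ab assms(1-3) by (intro integral_subset_le) auto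
  finally show ?thesis .
qed

lemma mono_on_nonpos_if_dominated_at_top:
  fixes f g :: "real \<Rightarrow> real"
  assumes "mono_on {0..} f" "g integrable_on {0..}" "\<forall>t\<in>{0..}. 0 \<le> g t"
    and "\<forall>\<^sub>F t in at_top. \<bar>f t\<bar> \<le> g t" "0 \<le> T"
  shows "f T \<le> 0"
proof (rule ccontr)
  assume "\<not> f T \<le> 0"
  obtain T0 where T0: "\<And>t. T0 \<le> t \<Longrightarrow> \<bar>f t\<bar> \<le> g t"
    using assms(4) unfolding eventually_at_top_linorder by blast
  obtain n :: nat where n: "integral {0..} g < f T * real n"
    using reals_Archimedean3 \<open>\<not> f T \<le> 0\<close> by (metis mult.commute not_le)
  define a where "a = max T T0"
  have "\<forall>t\<in>{a..a + real n}. f T \<le> g t"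
    using assms(1,5) T0 unfolding a_def
    by (smt (verit) atLeastAtMost_iff atLeast_iff mono_onD max.bounded_iff)
  moreover have "{a..a + real n} \<subseteq> {0..}"
    using assms(5) by (auto simp: a_def)
  ultimately have "f T * (a + real n - a) \<le> integral {0..} g"
    by (intro integral_ge_on_subinterval[OF assms(2,3)]) auto
  with n show False by simp
qed

lemma mono_on_nonneg_if_dominated_at_bot:
  fixes f g :: "real \<Rightarrow> real"
  assumes "mono_on {..0} f" "g integrable_on {..0}" "\<forall>t\<in>{..0}. 0 \<le> g t"
    and "\<forall>\<^sub>F t in at_bot. \<bar>f t\<bar> \<le> g t" "T \<le> 0"
  shows "0 \<le> f T"
proof (rule ccontr)
  assume "\<not> 0 \<le> f T"
  obtain T0 where T0: "\<And>t. t \<le> T0 \<Longrightarrow> \<bar>f t\<bar> \<le> g t"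
    using assms(4) unfolding eventually_at_bot_linorder by blast
  obtain n :: nat where n: "integral {..0} g < - f T * real n"
    using reals_Archimedean3 \<open>\<not> 0 \<le> f T\<close> by (metis mult.commute neg_0_less_iff_less not_le)
  define b where "b = min T T0"
  have "\<forall>t\<in>{b - real n..b}. - f T \<le> g t"
    using assms(1,5) T0 unfolding b_def
    by (smt (verit) atLeastAtMost_iff atMost_iff mono_onD min.bounded_iff)
  moreover have "{b - real n..b} \<subseteq> {..0}"
    using assms(5) by (auto simp: b_def)
  ultimately have "- f T * (b - (b - real n)) \<le> integral {..0} g"
    by (intro integral_ge_on_subinterval[OF assms(2,3)]) auto
  with n show False by simp
qed

definition boundary_form ::
    "(real \<Rightarrow> real^'n^'n) \<Rightarrow> (real \<Rightarrow> real^'n^'n) \<Rightarrow> (real \<Rightarrow> real^'n) \<Rightarrow> (real \<Rightarrow> real^'n)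
      \<Rightarrow> real \<Rightarrow> real" where
  "boundary_form P Q x x' t = x t \<bullet> (P t *v x' t + Q t *v x t)"

lemma boundary_form_has_derivative:
  assumes "W22_solution S P Q R x x' x''" "t \<in> S"
  shows "(boundary_form P Q x x' has_real_derivative
      vec_join (x' t) (x t) \<bullet> (block_mat (P t) (Q t) (R t) *v vec_join (x' t) (x t)))
    (at t within S)"
proof -
  have "(x has_vector_derivative x' t) (at t within S)"
    and "((\<lambda>s. P s *v x' s + Q s *v x s) has_vector_derivative
            (transpose (Q t) *v x' t + R t *v x t)) (at t within S)"
    using assms unfolding W22_solution_def by auto
  from has_derivative_inner[OF this[unfolded has_vector_derivative_def]]
  have "(boundary_form P Q x x' has_real_derivative
      x' t \<bullet> (P t *v x' t + Q t *v x t) + x t \<bullet> (transpose (Q t) *v x' t + R t *v x t))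
    (at t within S)"
    unfolding has_field_derivative_def boundary_form_def
    by (rule has_derivative_eq_rhs) (auto simp: fun_eq_iff algebra_simps inner_commute)
  then show ?thesis
    by (simp only: inner_block_mat_vec_join)
qed

lemma boundary_form_mono:
  assumes "is_interval S" "\<forall>t\<in>S. pos_def (block_mat (P t) (Q t) (R t))"
    and "W22_solution S P Q R x x' x''"
  shows "mono_on S (boundary_form P Q x x')"
  using assms(1) boundary_form_has_derivative[OF assms(3)]
proof (rule mono_on_if_has_real_derivative_nonneg)
  show "0 \<le> vec_join (x' t) (x t) \<bullet> (block_mat (P t) (Q t) (R t) *v vec_join (x' t) (x t))"
    if "t \<in> S" for t
    using assms(2) that by (simp add: pos_def_quadratic_nonneg)
qed

lemma W22_solution_eq_0_if_boundary_form_vanishes: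
  assumes "is_interval S" "infinite S" "\<forall>t\<in>S. pos_def (block_mat (P t) (Q t) (R t))"
    and "W22_solution S P Q R x x' x''"
    and "\<forall>s\<in>S. boundary_form P Q x x' s = 0" "t \<in> S"
  shows "x t = 0"
proof -
  have "t islimpt S"
    using assms(1,2,6) by (intro connected_imp_perfect is_interval_connected) auto
  then have "vec_join (x' t) (x t) \<bullet> (block_mat (P t) (Q t) (R t) *v vec_join (x' t) (x t)) = 0"
    using boundary_form_has_derivative[OF assms(4,6)] assms(5,6)
    by (rule has_real_derivative_eq_0_if_vanishing)
  then show ?thesis
    using assms(3,6) pos_def_quadratic_eq_0 vec_join_eq_0_iff by blast
qed

lemma boundary_form_eventually_bounded:
  assumes "F2 S F P Q R"
  shows "\<exists>B\<ge>0. \<forall>\<^sub>F t in F. t \<in> S \<longrightarrow>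
           \<bar>boundary_form P Q x x' t\<bar> \<le> B * (norm (x t) ^ 2 + norm (x' t) ^ 2)"
proof -
  obtain L C where "(P \<longlongrightarrow> L) F" "0 < C" and Q: "\<forall>t\<in>S. \<forall>v. norm (Q t *v v) \<le> C * norm v"
    using assms unfolding F2_def by blast
  moreover obtain B where "0 \<le> B" and P: "\<forall>\<^sub>F t in F. \<forall>v. norm (P t *v v) \<le> B * norm v"
    using tendsto_imp_eventually_matrix_vector_bounded[OF \<open>(P \<longlongrightarrow> L) F\<close>] by blast
  ultimately show ?thesis
    unfolding boundary_form_def
    by (intro exI[of _ "B + C"]) (auto elim!: eventually_mono intro!: abs_inner_le_sum_squares)
qed

lemma boundary_form_dominated:
  assumes "F2 S F P Q R" "W22_solution S P Q R x x' x''"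
  obtains g where "g integrable_on S" "\<forall>t\<in>S. 0 \<le> g t"
    "\<forall>\<^sub>F t in F. t \<in> S \<longrightarrow> \<bar>boundary_form P Q x x' t\<bar> \<le> g t"
proof -
  obtain B where "0 \<le> B"
    and bound: "\<forall>\<^sub>F t in F. t \<in> S \<longrightarrow>
                  \<bar>boundary_form P Q x x' t\<bar> \<le> B * (norm (x t) ^ 2 + norm (x' t) ^ 2)"
    using boundary_form_eventually_bounded[OF assms(1)] by blast
  have "(\<lambda>t. norm (x t) ^ 2) integrable_on S" "(\<lambda>t. norm (x' t) ^ 2) integrable_on S"
    using assms(2) unfolding W22_solution_def by auto
  from integrable_on_cmult_left[OF integrable_add[OF this], of B]
  have "(\<lambda>t. B * (norm (x t) ^ 2 + norm (x' t) ^ 2)) integrable_on S"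
    by simp
  with that bound \<open>0 \<le> B\<close> show thesis
    by simp
qed

lemma boundary_form_nonpos_at_top:
  assumes "F2 {0..} at_top P Q R" "\<forall>t\<in>{0..}. pos_def (block_mat (P t) (Q t) (R t))"
    and "W22_solution {0..} P Q R x x' x''" "0 \<le> T"
  shows "boundary_form P Q x x' T \<le> 0"
proof -
  obtain g where g: "g integrable_on {0..}" "\<forall>t\<in>{0..}. 0 \<le> g t"
    and bound: "\<forall>\<^sub>F t in at_top. t \<in> {0..} \<longrightarrow> \<bar>boundary_form P Q x x' t\<bar> \<le> g t"
    using boundary_form_dominated[OF assms(1,3)] .
  have "\<forall>\<^sub>F t in at_top. \<bar>boundary_form P Q x x' t\<bar> \<le> g t"
    using eventually_conj[OF bound eventually_ge_at_top[of 0]] by (rule eventually_mono) simp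
  with boundary_form_mono[OF is_interval_ci assms(2,3)] g \<open>0 \<le> T\<close> show ?thesis
    by (intro mono_on_nonpos_if_dominated_at_top) auto
qed

lemma boundary_form_nonneg_at_bot:
  assumes "F2 {..0} at_bot P Q R" "\<forall>t\<in>{..0}. pos_def (block_mat (P t) (Q t) (R t))"
    and "W22_solution {..0} P Q R x x' x''" "T \<le> 0"
  shows "0 \<le> boundary_form P Q x x' T"
proof -
  obtain g where g: "g integrable_on {..0}" "\<forall>t\<in>{..0}. 0 \<le> g t"
    and bound: "\<forall>\<^sub>F t in at_bot. t \<in> {..0} \<longrightarrow> \<bar>boundary_form P Q x x' t\<bar> \<le> g t"
    using boundary_form_dominated[OF assms(1,3)] .
  have "\<forall>\<^sub>F t in at_bot. \<bar>boundary_form P Q x x' t\<bar> \<le> g t"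
    using eventually_conj[OF bound eventually_le_at_bot[of 0]] by (rule eventually_mono) simp
  with boundary_form_mono[OF is_interval_ic assms(2,3)] g \<open>T \<le> 0\<close> show ?thesis
    by (intro mono_on_nonneg_if_dominated_at_bot) auto
qed

theorem lemma3p5:
  fixes P1 Q1 R1 P2 Q2 R2 :: "real \<Rightarrow> real^'n^'n"
    and x1 x1' x1'' x2 x2' x2'' :: "real \<Rightarrow> real^'n"
  assumes C1_1: "C1_on {0..} P1" "C1_on {0..} Q1" "C1_on {0..} R1"
    and C1_2: "C1_on {..0} P2" "C1_on {..0} Q2" "C1_on {..0} R2"
    and sym1: "sym_valued {0..} P1" "sym_valued {0..} R1"
    and sym2: "sym_valued {..0} P2" "sym_valued {..0} R2"
    and F2_1: "F2 {0..} at_top P1 Q1 R1"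
    and F2_2: "F2 {..0} at_bot P2 Q2 R2"
    and K1: "\<forall>t\<in>{0..}. pos_def (block_mat (P1 t) (Q1 t) (R1 t))"
    and K2: "\<forall>t\<in>{..0}. pos_def (block_mat (P2 t) (Q2 t) (R2 t))"
    and sol1: "W22_solution {0..} P1 Q1 R1 x1 x1' x1''"
    and sol2: "W22_solution {..0} P2 Q2 R2 x2 x2' x2''"
    and bc1: "x1 0 = x2 0"
    and bc2: "P1 0 *v x1' 0 + Q1 0 *v x1 0 = P2 0 *v x2' 0 + Q2 0 *v x2 0"
  shows "(\<forall>t\<in>{0..}. x1 t = 0) \<and> (\<forall>t\<in>{..0}. x2 t = 0)"
proof -
  let ?f1 = "boundary_form P1 Q1 x1 x1'" and ?f2 = "boundary_form P2 Q2 x2 x2'"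
  have mono1: "mono_on {0..} ?f1"
    using boundary_form_mono[OF is_interval_ci K1 sol1] .
  have mono2: "mono_on {..0} ?f2"
    using boundary_form_mono[OF is_interval_ic K2 sol2] .
  have nonpos1: "?f1 t \<le> 0" if "0 \<le> t" for t
    using boundary_form_nonpos_at_top[OF F2_1 K1 sol1 that] .
  have nonneg2: "0 \<le> ?f2 t" if "t \<le> 0" for t
    using boundary_form_nonneg_at_bot[OF F2_2 K2 sol2 that] .
  have "?f1 0 = ?f2 0"
    using bc1 bc2 by (simp add: boundary_form_def)
  then have "?f1 0 = 0" "?f2 0 = 0"
    using nonpos1[of 0] nonneg2[of 0] by simp_all
  have "?f1 t = 0" if "0 \<le> t" for t
    using mono_onD[OF mono1, of 0 t] nonpos1[OF that] \<open>?f1 0 = 0\<close> that by simp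
  moreover have "?f2 t = 0" if "t \<le> 0" for t
    using mono_onD[OF mono2, of t 0] nonneg2[OF that] \<open>?f2 0 = 0\<close> that by simp
  ultimately show ?thesis
    using W22_solution_eq_0_if_boundary_form_vanishes[OF is_interval_ci infinite_Ici K1 sol1]
      W22_solution_eq_0_if_boundary_form_vanishes[OF is_interval_ic infinite_Iic K2 sol2]
    by auto
qed

end
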